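(* Let $P$ be an infinite field and $P[X]=P[x_1,\ldots,x_n]$ the free commutative algebra over $P$ on a finite set $X$. Let $\mu:P[X]\to P[X]$ be a bijection such that $s\mapsto\mu s\mu^{-1}$ is an automorphism of the semigroup $\mathrm{End}(P[X])$, and suppose $\mu(0)=0$, $\mu(1)=1$ and $\mu(x_i)=x_i$ for all $i$. Then for every $a\in P$ and $u\in P[X]$, $$\mu(au)=\mu(a)\mu(u).$$
   Context: $\mathrm{End}(P[X])$ is the semigroup of all $P$-algebra endomorphisms of $P[X]$. *)

theory Defs
  imports "HOL-Library.Poly_Mapping"
begin

text \<open>The polynomial algebra P[X] over a field P on variable set X (= type 'x),
  realised as finitely supported maps from monomials (exponent vectors X \<Rightarrow>0 nat)
  to coefficients in P.\<close>
type_synonym ('x, 'a) mpoly = "('x \<Rightarrow>\<^sub>0 nat) \<Rightarrow>\<^sub>0 'a"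

definition const_poly :: "'a::zero \<Rightarrow> ('x, 'a) mpoly" where
  "const_poly c = Poly_Mapping.single 0 c"

definition var_poly :: "'x \<Rightarrow> ('x, 'a::{zero,one}) mpoly" where
  "var_poly x = Poly_Mapping.single (Poly_Mapping.single x 1) 1"

definition alg_End :: "(('x, 'a::field) mpoly \<Rightarrow> ('x, 'a) mpoly) set" where
  "alg_End = {f. (\<forall>u v. f (u + v) = f u + f v) \<and> (\<forall>u v. f (u * v) = f u * f v) \<and> f 1 = 1
                 \<and> (\<forall>c u. f (const_poly c * u) = const_poly c * f u)}"

text \<open>s \<mapsto> \<mu> s \<mu>^-1 is an automorphism of the semigroup End(P[X]) (for a bijection \<mu>):
  it maps End into End and onto End (injectivity and compatibility with composition
  are automatic for conjugation by a bijection).\<close>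
definition conj_is_End_auto :: "(('x, 'a::field) mpoly \<Rightarrow> ('x, 'a) mpoly) \<Rightarrow> bool" where
  "conj_is_End_auto \<mu> \<longleftrightarrow>
     (\<forall>s\<in>alg_End. \<mu> \<circ> s \<circ> inv \<mu> \<in> alg_End) \<and>
     (\<forall>t\<in>alg_End. \<exists>s\<in>alg_End. \<mu> \<circ> s \<circ> inv \<mu> = t)"

end

theory Submission
  imports Defs "HOL-Computational_Algebra.Polynomial"
begin

(*
  Conjugating an endomorphism s of P[X] gives t = \<mu> s \<mu>^-1 with t (\<mu> u) = \<mu> (s u); since \<mu> fixes
  the variable x and s is P-linear, t (\<mu> (c x)) = \<mu> (c (s x)). Hence f = \<mu> (a x) is fixed by the
  retraction P[X] \<rightarrow> P[x] and killed by the substitution X \<mapsto> 0, so f is a polynomial in x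
  without constant term. Conjugating x \<mapsto> a x yields an endomorphism sending x to f and
  g = \<mu> (a^-1 x) \<in> P[x] to x, so g \<circ> f = x, f has degree 1, and f = b x. Conjugating x \<mapsto> v then
  gives \<mu> (a v) = b \<mu> v, and v = 1 identifies b with \<mu> a.
*)

lemma const_poly_add: "const_poly (a + b) = const_poly a + (const_poly b :: ('x, 'a::monoid_add) mpoly)"
  by (simp add: const_poly_def single_add)

lemma const_poly_mult:
  "const_poly (a * b) = const_poly a * (const_poly b :: ('x, 'a::semiring_0) mpoly)"
  by (simp add: const_poly_def mult_single)

lemma const_poly_0 [simp]: "const_poly 0 = 0"
  by (simp add: const_poly_def)

lemma const_poly_1 [simp]: "const_poly 1 = (1 :: ('x, 'a::semiring_1) mpoly)"
  by (simp add: const_poly_def)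

lemma const_poly_eq_iff [simp]: "const_poly a = const_poly b \<longleftrightarrow> a = b"
  by (metis const_poly_def lookup_single_eq)

lemma const_poly_eq_0_iff [simp]: "const_poly a = 0 \<longleftrightarrow> a = 0"
  using const_poly_eq_iff[of a 0] by simp

lemma alg_End_add: "h \<in> alg_End \<Longrightarrow> h (u + v) = h u + h v"
  and alg_End_mult: "h \<in> alg_End \<Longrightarrow> h (u * v) = h u * h v"
  and alg_End_1: "h \<in> alg_End \<Longrightarrow> h 1 = 1"
  and alg_End_scale: "h \<in> alg_End \<Longrightarrow> h (const_poly c * u) = const_poly c * h u"
  unfolding alg_End_def by blast+

lemma alg_End_0: "h \<in> alg_End \<Longrightarrow> h 0 = 0"
  using alg_End_add[of h 0 0] by simp

lemma alg_End_const: "h \<in> alg_End \<Longrightarrow> h (const_poly c) = const_poly c"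
  using alg_End_scale[of h c 1] alg_End_1[of h] by simp

definition eval_monomial :: "('x \<Rightarrow> ('x, 'a::comm_semiring_1) mpoly) \<Rightarrow> ('x \<Rightarrow>\<^sub>0 nat) \<Rightarrow> ('x, 'a) mpoly"
  where "eval_monomial \<sigma> m = (\<Prod>i\<in>Poly_Mapping.keys m. \<sigma> i ^ Poly_Mapping.lookup m i)"

definition subst_poly :: "('x \<Rightarrow> ('x, 'a::comm_semiring_1) mpoly) \<Rightarrow> ('x, 'a) mpoly \<Rightarrow> ('x, 'a) mpoly"
  where "subst_poly \<sigma> p =
    (\<Sum>m\<in>Poly_Mapping.keys p. const_poly (Poly_Mapping.lookup p m) * eval_monomial \<sigma> m)"

lemma eval_monomial_superset:
  assumes "finite K" "Poly_Mapping.keys m \<subseteq> K"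
  shows "eval_monomial \<sigma> m = (\<Prod>i\<in>K. \<sigma> i ^ Poly_Mapping.lookup m i)"
  unfolding eval_monomial_def
  by (rule prod.mono_neutral_left) (use assms in \<open>auto simp: in_keys_iff\<close>)

lemma eval_monomial_add: "eval_monomial \<sigma> (m + n) = eval_monomial \<sigma> m * eval_monomial \<sigma> n"
proof -
  let ?K = "Poly_Mapping.keys m \<union> Poly_Mapping.keys n"
  have "Poly_Mapping.keys (m + n) \<subseteq> ?K"
    by (rule keys_add)
  then show ?thesis
    by (simp add: eval_monomial_superset[of ?K] lookup_add power_add prod.distrib)
qed

lemma eval_monomial_single: "eval_monomial \<sigma> (Poly_Mapping.single i 1) = \<sigma> i"
  unfolding eval_monomial_def by simp

lemma subst_poly_add: "subst_poly \<sigma> (p + q) = subst_poly \<sigma> p + subst_poly \<sigma> q"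
  unfolding subst_poly_def
  by (rule setsum_keys_plus_distrib) (simp_all add: const_poly_add distrib_right)

lemma subst_poly_0 [simp]: "subst_poly \<sigma> 0 = 0"
  by (simp add: subst_poly_def)

lemma subst_poly_sum: "subst_poly \<sigma> (sum f A) = (\<Sum>a\<in>A. subst_poly \<sigma> (f a))"
  by (induction A rule: infinite_finite_induct) (simp_all add: subst_poly_add)

lemma subst_poly_single:
  "subst_poly \<sigma> (Poly_Mapping.single m c) = const_poly c * eval_monomial \<sigma> m"
  by (cases "c = 0") (simp_all add: subst_poly_def)

lemma sum_single_lookup:
  "p = (\<Sum>m\<in>Poly_Mapping.keys p. Poly_Mapping.single m (Poly_Mapping.lookup p m))"
  by (rule poly_mapping_eqI) (simp add: lookup_sum lookup_single when_def in_keys_iff)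

lemma subst_poly_mult: "subst_poly \<sigma> (p * q) = subst_poly \<sigma> p * subst_poly \<sigma> q"
proof -
  have "p * q = (\<Sum>m\<in>Poly_Mapping.keys p. \<Sum>n\<in>Poly_Mapping.keys q.
      Poly_Mapping.single (m + n) (Poly_Mapping.lookup p m * Poly_Mapping.lookup q n))"
    by (subst (1 2) sum_single_lookup) (simp add: sum_product mult_single)
  then have "subst_poly \<sigma> (p * q) = (\<Sum>m\<in>Poly_Mapping.keys p. \<Sum>n\<in>Poly_Mapping.keys q.
      const_poly (Poly_Mapping.lookup p m) * eval_monomial \<sigma> m *
      (const_poly (Poly_Mapping.lookup q n) * eval_monomial \<sigma> n))"
    by (simp add: subst_poly_sum subst_poly_single eval_monomial_add const_poly_mult mult_ac)
  then show ?thesis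
    by (simp add: subst_poly_def sum_product)
qed

lemma subst_poly_const [simp]: "subst_poly \<sigma> (const_poly c) = const_poly c"
  by (simp add: const_poly_def subst_poly_single eval_monomial_def)

lemma subst_poly_var [simp]: "subst_poly \<sigma> (var_poly i) = \<sigma> i"
  unfolding var_poly_def subst_poly_single eval_monomial_single by simp

lemma subst_poly_1: "subst_poly \<sigma> 1 = 1"
  using subst_poly_const[of \<sigma> 1] by simp

lemma subst_poly_in_alg_End: "subst_poly \<sigma> \<in> alg_End"
  by (simp add: alg_End_def subst_poly_add subst_poly_mult subst_poly_1)

lemma subst_poly_closed:
  assumes add: "\<And>u v. u \<in> R \<Longrightarrow> v \<in> R \<Longrightarrow> u + v \<in> R"
    and mult: "\<And>u v. u \<in> R \<Longrightarrow> v \<in> R \<Longrightarrow> u * v \<in> R"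
    and const: "\<And>c. const_poly c \<in> R"
    and vars: "\<And>i. \<sigma> i \<in> R"
  shows "subst_poly \<sigma> p \<in> R"
proof -
  have zero: "0 \<in> R" and one: "1 \<in> R"
    using const[of 0] const[of 1] by simp_all
  have sum: "sum f A \<in> R" if "\<And>a. f a \<in> R" for f :: "_ \<Rightarrow> ('a, 'b) mpoly" and A
    by (induction A rule: infinite_finite_induct) (simp_all add: zero add that)
  have prod: "prod f A \<in> R" if "\<And>a. f a \<in> R" for f :: "_ \<Rightarrow> ('a, 'b) mpoly" and A
    by (induction A rule: infinite_finite_induct) (simp_all add: one mult that)
  have power: "u ^ n \<in> R" if "u \<in> R" for u n
    by (induction n) (simp_all add: one mult that)
  show ?thesis
    unfolding subst_poly_def eval_monomial_def
    by (intro sum prod mult const power vars)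
qed

definition poly_in :: "'a poly \<Rightarrow> ('x, 'a::comm_semiring_1) mpoly \<Rightarrow> ('x, 'a) mpoly"
  where "poly_in p u = poly (map_poly const_poly p) u"

lemma poly_in_pCons: "poly_in (pCons a p) u = const_poly a + u * poly_in p u"
  by (simp add: poly_in_def map_poly_pCons)

lemma poly_in_0 [simp]: "poly_in 0 u = 0"
  by (simp add: poly_in_def)

lemma poly_in_const [simp]: "poly_in [:c:] u = const_poly c"
  by (simp add: poly_in_pCons)

lemma poly_in_X [simp]: "poly_in [:0, 1:] u = u"
  by (simp add: poly_in_pCons)

lemma poly_in_linear: "poly_in [:0, c:] u = const_poly c * u"
  by (simp add: poly_in_pCons mult.commute)

lemma poly_in_add: "poly_in (p + q) u = poly_in p u + poly_in q u"
  by (induction p q rule: poly_induct2) (simp_all add: poly_in_pCons const_poly_add algebra_simps)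

lemma poly_in_smult: "poly_in (smult c p) u = const_poly c * poly_in p u"
  by (induction p) (simp_all add: poly_in_pCons const_poly_mult algebra_simps)

lemma poly_in_mult: "poly_in (p * q) u = poly_in p u * poly_in q u"
  by (induction p) (simp_all add: poly_in_pCons poly_in_add poly_in_smult algebra_simps)

lemma poly_in_pcompose: "poly_in (pcompose p q) u = poly_in p (poly_in q u)"
  by (induction p) (simp_all add: pcompose_pCons poly_in_pCons poly_in_add poly_in_mult)

lemma poly_in_at_const: "poly_in p (const_poly c) = const_poly (poly p c)"
  by (induction p) (simp_all add: poly_in_pCons const_poly_add const_poly_mult)

lemma poly_in_at_0: "poly_in p 0 = const_poly (poly p 0)"
  using poly_in_at_const[of p 0] by simp

lemma alg_End_poly_in: "h \<in> alg_End \<Longrightarrow> h (poly_in p u) = poly_in p (h u)"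
  by (induction p) (simp_all add: poly_in_pCons alg_End_add alg_End_mult alg_End_const alg_End_0)

abbreviation polys_in :: "('x, 'a::comm_semiring_1) mpoly \<Rightarrow> ('x, 'a) mpoly set"
  where "polys_in w \<equiv> range (\<lambda>p. poly_in p w)"

lemma polys_in_add: "u \<in> polys_in w \<Longrightarrow> v \<in> polys_in w \<Longrightarrow> u + v \<in> polys_in w"
  by (auto simp flip: poly_in_add)

lemma polys_in_mult: "u \<in> polys_in w \<Longrightarrow> v \<in> polys_in w \<Longrightarrow> u * v \<in> polys_in w"
  by (auto simp flip: poly_in_mult)

lemma polys_in_const: "const_poly c \<in> polys_in w"
  using poly_in_const[of c w] by (metis rangeI)

lemma polys_in_generator: "w \<in> polys_in w"
  using poly_in_X[of w] by (metis rangeI)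

lemma inj_poly_in_var:
  assumes "infinite (UNIV :: 'a::field set)"
  shows "inj (\<lambda>p :: 'a poly. poly_in p (var_poly x))"
proof (rule injI)
  fix p q :: "'a poly"
  assume eq: "poly_in p (var_poly x) = poly_in q (var_poly x)"
  have "poly p c = poly q c" for c
    using arg_cong[OF eq, of "subst_poly (\<lambda>_. const_poly c)"]
    by (simp add: alg_End_poly_in[OF subst_poly_in_alg_End] poly_in_at_const)
  then have "{c. poly (p - q) c = 0} = UNIV"
    by simp
  with assms poly_roots_finite[of "p - q"] show "p = q"
    by auto
qed

lemma pcompose_eq_X_imp_linear:
  fixes p q :: "'a::idom poly"
  assumes "pcompose q p = [:0, 1:]" and "poly p 0 = 0"
  shows "p = [:0, coeff p 1:]"
proof -
  have "degree q * degree p = 1"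
    using degree_pcompose[of q p] assms(1) by simp
  then have "degree p = 1"
    by simp
  moreover have "coeff p 0 = 0"
    using assms(2) by (simp add: poly_0_coeff_0)
  ultimately show ?thesis
    by (intro poly_eqI) (simp add: coeff_pCons coeff_eq_0 split: nat.split)
qed

locale var_fixing_conjugation =
  fixes \<mu> :: "('x, 'a::field) mpoly \<Rightarrow> ('x, 'a) mpoly"
  assumes inj: "inj \<mu>"
    and conj_auto: "conj_is_End_auto \<mu>"
    and fixes_0: "\<mu> 0 = 0"
    and fixes_var: "\<And>x. \<mu> (var_poly x) = var_poly x"
begin

lemma End_sending_var_to_image:
  obtains t where "t \<in> alg_End" and "t (var_poly x) = \<mu> v"
    and "\<And>c. t (\<mu> (const_poly c * var_poly x)) = \<mu> (const_poly c * v)"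
proof -
  define s where "s = subst_poly (\<lambda>i. if i = x then v else var_poly i)"
  have s_End: "s \<in> alg_End" and s_var: "s (var_poly x) = v"
    by (simp_all add: s_def subst_poly_in_alg_End)
  define t where "t = \<mu> \<circ> s \<circ> inv \<mu>"
  have t_conj: "t (\<mu> u) = \<mu> (s u)" for u
    by (simp add: t_def inv_f_f[OF inj])
  have "t \<in> alg_End"
    using conj_auto s_End by (simp add: conj_is_End_auto_def t_def)
  moreover have "t (var_poly x) = \<mu> v"
    using t_conj[of "var_poly x"] by (simp add: fixes_var s_var)
  moreover have "t (\<mu> (const_poly c * var_poly x)) = \<mu> (const_poly c * v)" for c
    by (simp add: t_conj alg_End_scale[OF s_End] s_var)
  ultimately show thesis
    using that by blast
qed

lemma End_image_scaled_var:
  assumes "t \<in> alg_End" and "t (var_poly x) = \<mu> w"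
  shows "t (\<mu> (const_poly c * var_poly x)) = \<mu> (const_poly c * w)"
proof -
  obtain s where s_End: "s \<in> alg_End" and "\<mu> \<circ> s \<circ> inv \<mu> = t"
    using conj_auto assms(1) by (auto simp: conj_is_End_auto_def)
  then have t_conj: "t (\<mu> u) = \<mu> (s u)" for u
    by (auto simp: inv_f_f[OF inj])
  have "\<mu> (s (var_poly x)) = \<mu> w"
    using t_conj[of "var_poly x"] assms(2) by (simp add: fixes_var)
  then have "s (var_poly x) = w"
    using inj by (simp add: inj_eq)
  then show ?thesis
    by (simp add: t_conj alg_End_scale[OF s_End])
qed

lemma image_scaled_var_univariate:
  "\<mu> (const_poly c * var_poly x) \<in> polys_in (var_poly x)"
proof -
  define r :: "('x, 'a) mpoly \<Rightarrow> ('x, 'a) mpoly"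
    where "r = subst_poly (\<lambda>i. if i = x then var_poly x else 0)"
  have "r \<in> alg_End" and "r (var_poly x) = \<mu> (var_poly x)"
    by (simp_all add: r_def subst_poly_in_alg_End fixes_var)
  then have "r (\<mu> (const_poly c * var_poly x)) = \<mu> (const_poly c * var_poly x)"
    by (rule End_image_scaled_var)
  moreover have "r u \<in> polys_in (var_poly x)" for u
    unfolding r_def
    by (rule subst_poly_closed)
      (auto simp: polys_in_add polys_in_mult polys_in_const polys_in_generator
        intro: range_eqI[where x = 0])
  ultimately show ?thesis
    by metis
qed

lemma image_scaled_var_vanishes_at_0:
  "subst_poly (\<lambda>_. 0) (\<mu> (const_poly c * var_poly x)) = 0"
proof -
  have "subst_poly (\<lambda>_. 0) (var_poly x) = \<mu> 0"
    by (simp add: fixes_0)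
  from End_image_scaled_var[OF subst_poly_in_alg_End this] show ?thesis
    by (simp add: fixes_0)
qed

lemma image_scaled_var_linear:
  assumes inf: "infinite (UNIV :: 'a set)" and "a \<noteq> 0"
  obtains b where "\<mu> (const_poly a * var_poly x) = const_poly b * var_poly x"
proof -
  let ?X = "var_poly x :: ('x, 'a) mpoly"
  obtain p where p: "\<mu> (const_poly a * ?X) = poly_in p ?X"
    using image_scaled_var_univariate by blast
  obtain q where q: "\<mu> (const_poly (inverse a) * ?X) = poly_in q ?X"
    using image_scaled_var_univariate by blast
  obtain t where t_End: "t \<in> alg_End" and t_var: "t ?X = \<mu> (const_poly a * ?X)"
    and t_scaled: "\<And>c. t (\<mu> (const_poly c * ?X)) = \<mu> (const_poly c * (const_poly a * ?X))"
    using End_sending_var_to_image[where x = x and v = "const_poly a * ?X"] by metis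
  have "poly_in (pcompose q p) ?X = t (poly_in q ?X)"
    by (simp add: alg_End_poly_in[OF t_End] poly_in_pcompose t_var p)
  also have "\<dots> = \<mu> ?X"
    using t_scaled[of "inverse a"] q \<open>a \<noteq> 0\<close>
    by (simp add: mult.assoc[symmetric] const_poly_mult[symmetric])
  also have "\<dots> = poly_in [:0, 1:] ?X"
    by (simp add: fixes_var)
  finally have "pcompose q p = [:0, 1:]"
    by (rule injD[OF inj_poly_in_var[OF inf]])
  moreover have "poly p 0 = 0"
    using image_scaled_var_vanishes_at_0[of a x] p
    by (simp add: alg_End_poly_in[OF subst_poly_in_alg_End] poly_in_at_0)
  ultimately have "p = [:0, coeff p 1:]"
    by (rule pcompose_eq_X_imp_linear)
  then have "poly_in p ?X = const_poly (coeff p 1) * ?X"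
    by (metis poly_in_linear)
  with p have "\<mu> (const_poly a * ?X) = const_poly (coeff p 1) * ?X"
    by simp
  then show thesis
    by (rule that)
qed

lemma image_scalar_mult:
  assumes "\<mu> (const_poly a * var_poly x) = const_poly b * var_poly x"
  shows "\<mu> (const_poly a * v) = const_poly b * \<mu> v"
proof -
  obtain t where t_End: "t \<in> alg_End" and t_var: "t (var_poly x) = \<mu> v"
    and t_scaled: "\<And>c. t (\<mu> (const_poly c * var_poly x)) = \<mu> (const_poly c * v)"
    using End_sending_var_to_image[where x = x and v = v] by metis
  have "\<mu> (const_poly a * v) = t (const_poly b * var_poly x)"
    using t_scaled[of a] assms by simp
  also have "\<dots> = const_poly b * \<mu> v"
    by (simp add: alg_End_scale[OF t_End] t_var)
  finally show ?thesis .
qed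

end

theorem lemma3p3:
  fixes \<mu> :: "('x::finite, 'a::field) mpoly \<Rightarrow> ('x, 'a) mpoly"
  assumes "infinite (UNIV :: 'a set)"
    and "bij \<mu>"
    and "conj_is_End_auto \<mu>"
    and "\<mu> 0 = 0" and "\<mu> 1 = 1"
    and "\<forall>x. \<mu> (var_poly x) = var_poly x"
  shows "\<forall>a u. \<mu> (const_poly a * u) = \<mu> (const_poly a) * \<mu> u"
proof (intro allI)
  fix a :: 'a and u :: "('x, 'a) mpoly"
  interpret var_fixing_conjugation \<mu>
    using assms by unfold_locales (simp_all add: bij_is_inj)
  show "\<mu> (const_poly a * u) = \<mu> (const_poly a) * \<mu> u"
  proof (cases "a = 0")
    case True
    then show ?thesis
      using fixes_0 by simp
  next
    case False
    obtain b where b: "\<mu> (const_poly a * var_poly undefined) = const_poly b * var_poly undefined"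
      using image_scaled_var_linear[OF assms(1) False] .
    have "\<mu> (const_poly a) = const_poly b"
      using image_scalar_mult[OF b, of 1] assms(5) by simp
    with image_scalar_mult[OF b] show ?thesis
      by simp
  qed
qed

end
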